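(* Let $\mu$ be a measure on $L_n$ and define $\tilde\mu(j)=\mu(j)+\mu(n+1-j)$ for $1\le j\le n$. Then $C^0_{\tilde\mu}\le C^0_\mu$ and $C_{\tilde\mu}\le C_\mu$.
   Context: $L_n$ is the path graph with vertices $\{1,\dots,n\}$ and edges $\{j,j+1\}$, with distance $|i-j|$. A measure on $L_n$ is a weight function $\mu:\{1,\dots,n\}\to(0,\infty)$, $\mu(A)=\sum_{v\in A}\mu(v)$. Closed balls: $B(x,r)=\{y:|x-y|\le r\}$. $C_\mu=\sup\{\mu(B(x,2k+1))/\mu(B(x,k)):1\le x\le n,\ k\ge0\}$ and $C^0_\mu=\max_x\mu(B(x,1))/\mu(x)$. *)

theory Defs
  imports Complex_Main
begin

text \<open>Path graph L_n on vertices {1..n}, graph distance |i - j|.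
  A measure is a positive weight function mu on {1..n}.\<close>

definition Lball :: "nat \<Rightarrow> nat \<Rightarrow> nat \<Rightarrow> nat set" where
  "Lball n x r = {y \<in> {1..n}. \<bar>int x - int y\<bar> \<le> int r}"

definition meas :: "(nat \<Rightarrow> real) \<Rightarrow> nat set \<Rightarrow> real" where
  "meas mu A = (\<Sum>v\<in>A. mu v)"

definition doubling_const :: "nat \<Rightarrow> (nat \<Rightarrow> real) \<Rightarrow> real" where
  "doubling_const n mu =
     Sup {meas mu (Lball n x (2*k+1)) / meas mu (Lball n x k) | x k. x \<in> {1..n}}"

definition local_const :: "nat \<Rightarrow> (nat \<Rightarrow> real) \<Rightarrow> real" where
  "local_const n mu = Max {meas mu (Lball n x 1) / mu x | x. x \<in> {1..n}}"

definition sym_measure :: "nat \<Rightarrow> (nat \<Rightarrow> real) \<Rightarrow> nat \<Rightarrow> real" where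
  "sym_measure n mu j = mu j + mu (n + 1 - j)"

end

theory Submission
  imports Defs
begin

text \<open>The reflection \<open>j \<mapsto> n + 1 - j\<close> is an isometry of \<open>L\<^sub>n\<close>, so it maps the ball
  \<open>B(x, r)\<close> onto \<open>B(n + 1 - x, r)\<close>. Hence \<open>\<tilde>\<mu>(B(x, r)) = \<mu>(B(x, r)) + \<mu>(B(n + 1 - x, r))\<close>,
  and every ratio \<open>\<tilde>\<mu>(B(x, r)) / \<tilde>\<mu>(B(x, s))\<close> is the mediant of the corresponding
  \<open>\<mu>\<close>-ratios at \<open>x\<close> and at \<open>n + 1 - x\<close>, so it is bounded by the larger of the two.
  Both constants are suprema of such ratios, \<open>C\<^sup>0\<close> with \<open>r = 1\<close> and \<open>s = 0\<close>.\<close>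

lemma mediant_le_max:
  fixes a b c d :: "'a :: linordered_field"
  assumes "c > 0" "d > 0"
  shows "(a + b) / (c + d) \<le> max (a / c) (b / d)"
proof (cases "a / c \<le> b / d")
  case True
  then have "a * d \<le> b * c" using assms by (simp add: field_simps)
  then have "(a + b) / (c + d) \<le> b / d" using assms by (simp add: field_simps)
  then show ?thesis by simp
next
  case False
  then have "b * c \<le> a * d" using assms by (simp add: field_simps)
  then have "(a + b) / (c + d) \<le> a / c" using assms by (simp add: field_simps)
  then show ?thesis by simp
qed

lemma reflect_mem_atLeastAtMost: "(x::nat) \<in> {1..n} \<Longrightarrow> n + 1 - x \<in> {1..n}"
  by auto

lemma finite_Lball: "finite (Lball n x r)"
  by (simp add: Lball_def)

lemma Lball_subset: "Lball n x r \<subseteq> {1..n}"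
  by (auto simp: Lball_def)

lemma Lball_0: "x \<in> {1..n} \<Longrightarrow> Lball n x 0 = {x}"
  by (auto simp: Lball_def)

lemma reflect_image_Lball:
  assumes "x \<in> {1..n}"
  shows "(\<lambda>j. n + 1 - j) ` Lball n x r = Lball n (n + 1 - x) r"
proof
  show "(\<lambda>j. n + 1 - j) ` Lball n x r \<subseteq> Lball n (n + 1 - x) r"
    using assms by (auto simp: Lball_def)
next
  show "Lball n (n + 1 - x) r \<subseteq> (\<lambda>j. n + 1 - j) ` Lball n x r"
  proof
    fix y assume y: "y \<in> Lball n (n + 1 - x) r"
    then have "n + 1 - y \<in> Lball n x r" and "y = n + 1 - (n + 1 - y)"
      using assms by (auto simp: Lball_def)
    then show "y \<in> (\<lambda>j. n + 1 - j) ` Lball n x r" by blast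
  qed
qed

lemma meas_sym_measure_Lball:
  assumes "x \<in> {1..n}"
  shows "meas (sym_measure n mu) (Lball n x r)
       = meas mu (Lball n x r) + meas mu (Lball n (n + 1 - x) r)"
proof -
  have "inj_on (\<lambda>j. n + 1 - j) (Lball n x r)"
    by (auto simp: inj_on_def Lball_def)
  then have "(\<Sum>j\<in>Lball n x r. mu (n + 1 - j)) = meas mu ((\<lambda>j. n + 1 - j) ` Lball n x r)"
    by (simp add: meas_def sum.reindex)
  then show ?thesis
    using reflect_image_Lball[OF assms] by (simp add: meas_def sym_measure_def sum.distrib)
qed

lemma meas_Lball_0: "x \<in> {1..n} \<Longrightarrow> meas mu (Lball n x 0) = mu x"
  by (simp add: Lball_0 meas_def)

context
  fixes n :: nat and mu :: "nat \<Rightarrow> real"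
  assumes pos: "\<forall>j\<in>{1..n}. mu j > 0"
begin

lemma meas_mono: "A \<subseteq> B \<Longrightarrow> B \<subseteq> {1..n} \<Longrightarrow> finite B \<Longrightarrow> meas mu A \<le> meas mu B"
  unfolding meas_def by (rule sum_mono2) (use pos in \<open>auto intro: less_imp_le\<close>)

lemma meas_Lball_ge_center:
  assumes "x \<in> {1..n}"
  shows "mu x \<le> meas mu (Lball n x r)"
proof -
  have "meas mu (Lball n x 0) \<le> meas mu (Lball n x r)"
    by (intro meas_mono Lball_subset finite_Lball) (auto simp: Lball_def)
  then show ?thesis by (simp add: meas_Lball_0[OF assms])
qed

lemma meas_Lball_pos: "x \<in> {1..n} \<Longrightarrow> meas mu (Lball n x r) > 0"
  using meas_Lball_ge_center[of x r] pos by fastforce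

lemma ratio_sym_measure_le_max:
  assumes x: "x \<in> {1..n}"
  shows "meas (sym_measure n mu) (Lball n x r) / meas (sym_measure n mu) (Lball n x s)
       \<le> max (meas mu (Lball n x r) / meas mu (Lball n x s))
             (meas mu (Lball n (n + 1 - x) r) / meas mu (Lball n (n + 1 - x) s))"
  unfolding meas_sym_measure_Lball[OF x]
  by (intro mediant_le_max meas_Lball_pos x reflect_mem_atLeastAtMost)

lemma local_const_sym_measure_le: "local_const n (sym_measure n mu) \<le> local_const n mu"
proof (cases "n = 0")
  case True
  then show ?thesis by (simp add: local_const_def)
next
  case False
  let ?ratio = "\<lambda>mu x. meas mu (Lball n x 1) / meas mu (Lball n x 0)"
  have local_const_eq: "local_const n m = Max (?ratio m ` {1..n})" for m
    unfolding local_const_def by (rule arg_cong[where f = Max]) (auto simp: meas_Lball_0)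
  show ?thesis
    unfolding local_const_eq
  proof (rule Max.boundedI)
    show "?ratio (sym_measure n mu) ` {1..n} \<noteq> {}" using False by simp
    fix a assume "a \<in> ?ratio (sym_measure n mu) ` {1..n}"
    then obtain x where x: "x \<in> {1..n}" and a: "a = ?ratio (sym_measure n mu) x" by blast
    have "a \<le> max (?ratio mu x) (?ratio mu (n + 1 - x))"
      unfolding a by (rule ratio_sym_measure_le_max[OF x])
    also have "\<dots> \<le> Max (?ratio mu ` {1..n})"
      using x reflect_mem_atLeastAtMost[OF x] by simp
    finally show "a \<le> Max (?ratio mu ` {1..n})" .
  qed simp
qed

lemma bdd_above_doubling_ratios:
  "bdd_above {meas mu (Lball n x (2*k+1)) / meas mu (Lball n x k) | x k. x \<in> {1..n}}"
proof (rule bdd_aboveI)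
  fix t assume "t \<in> {meas mu (Lball n x (2*k+1)) / meas mu (Lball n x k) | x k. x \<in> {1..n}}"
  then obtain x k where x: "x \<in> {1..n}"
    and t: "t = meas mu (Lball n x (2*k+1)) / meas mu (Lball n x k)" by blast
  have "t \<le> meas mu {1..n} / meas mu (Lball n x k)"
    unfolding t using meas_Lball_pos[OF x, of k]
    by (intro divide_right_mono meas_mono Lball_subset finite_Lball) auto
  also have "\<dots> \<le> meas mu {1..n} / mu x"
  proof (rule divide_left_mono)
    show "0 \<le> meas mu {1..n}"
      unfolding meas_def using pos by (intro sum_nonneg) (auto intro: less_imp_le)
    show "0 < meas mu (Lball n x k) * mu x"
      using meas_Lball_pos[OF x] pos x by simp
  qed (rule meas_Lball_ge_center[OF x])
  also have "\<dots> \<le> Max ((\<lambda>y. meas mu {1..n} / mu y) ` {1..n})"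
    using x by (intro Max_ge) auto
  finally show "t \<le> Max ((\<lambda>y. meas mu {1..n} / mu y) ` {1..n})" .
qed

lemma doubling_const_sym_measure_le: "doubling_const n (sym_measure n mu) \<le> doubling_const n mu"
proof (cases "n = 0")
  case True
  then show ?thesis by (simp add: doubling_const_def)
next
  case False
  let ?ratio = "\<lambda>mu x k. meas mu (Lball n x (2*k+1)) / meas mu (Lball n x k)"
  show ?thesis
    unfolding doubling_const_def
  proof (rule cSup_least)
    have "?ratio (sym_measure n mu) 1 0 \<in> {?ratio (sym_measure n mu) x k | x k. x \<in> {1..n}}"
      using False by fastforce
    then show "{?ratio (sym_measure n mu) x k | x k. x \<in> {1..n}} \<noteq> {}"
      by blast
    fix a assume "a \<in> {?ratio (sym_measure n mu) x k | x k. x \<in> {1..n}}"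
    then obtain x k where x: "x \<in> {1..n}" and a: "a = ?ratio (sym_measure n mu) x k" by blast
    have "a \<le> max (?ratio mu x k) (?ratio mu (n + 1 - x) k)"
      unfolding a by (rule ratio_sym_measure_le_max[OF x])
    also have "\<dots> \<le> Sup {?ratio mu x k | x k. x \<in> {1..n}}"
    proof -
      have "?ratio mu y k \<le> Sup {?ratio mu x k | x k. x \<in> {1..n}}" if "y \<in> {1..n}" for y
        by (rule cSup_upper[OF _ bdd_above_doubling_ratios]) (use that in blast)
      then show ?thesis
        using x reflect_mem_atLeastAtMost[OF x] by simp
    qed
    finally show "a \<le> Sup {?ratio mu x k | x k. x \<in> {1..n}}" .
  qed
qed

end

theorem lemma3p1:
  fixes n :: nat and mu :: "nat \<Rightarrow> real"
  assumes "\<forall>j\<in>{1..n}. mu j > 0"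
  shows "local_const n (sym_measure n mu) \<le> local_const n mu
       \<and> doubling_const n (sym_measure n mu) \<le> doubling_const n mu"
  using local_const_sym_measure_le[OF assms] doubling_const_sym_measure_le[OF assms] by simp

end
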